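(* Let $N\ge2$ and $0<p<1$, and let $V$ be the vertex set (of size $2N$, two parts of size $N$) of the random bipartite graph $G_{N,N,p}$. Let $T\subseteq V$ with $|T|=t$, and let $X$ be the number of vertices in $V\setminus T$ of degree at most $1$. Set \[\mu=(2N-t)\big((1-p)^N+Np(1-p)^{N-1}\big),\qquad \sigma=pN\big((1-p)^{N-1}+(N-1)p(1-p)^{N-2}\big).\] Then \[\mathbb{P}(X=0)\le\exp\big\{-\mu+\mu\,\sigma\log(1+1/\sigma)\big\}.\]
   Context: $G_{N,N,p}$ is the random bipartite graph with parts of size $N$ in which each of the $N^2$ pairs with one vertex in each part is an edge independently with probability $p$. *)

theory Defs
  imports "HOL-Probability.Probability"
begin

text \<open>Vertices: Inl i (left part) and Inr j
  (right part) for i, j < N. A graph is encoded by its edge indicator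
  G :: nat \<times> nat \<Rightarrow> bool, where G (i,j) means Inl i and Inr j are adjacent.\<close>

definition bip_vertices :: "nat \<Rightarrow> (nat + nat) set" where
  "bip_vertices N = Inl ` {..<N} \<union> Inr ` {..<N}"

definition G_NNp :: "nat \<Rightarrow> real \<Rightarrow> (nat \<times> nat \<Rightarrow> bool) pmf" where
  "G_NNp N p = Pi_pmf ({..<N} \<times> {..<N}) False (\<lambda>_. bernoulli_pmf p)"

fun bip_degree :: "nat \<Rightarrow> (nat \<times> nat \<Rightarrow> bool) \<Rightarrow> nat + nat \<Rightarrow> nat" where
  "bip_degree N G (Inl i) = card {j \<in> {..<N}. G (i, j)}"
| "bip_degree N G (Inr j) = card {i \<in> {..<N}. G (i, j)}"

definition low_deg_count :: "nat \<Rightarrow> (nat + nat) set \<Rightarrow> (nat \<times> nat \<Rightarrow> bool) \<Rightarrow> nat" where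
  "low_deg_count N T G = card {v \<in> bip_vertices N - T. bip_degree N G v \<le> 1}"

end

(*
  Let K and C be the vertices of the two parts outside T, and E the event that all of them
  have degree at least 2, so that P(X = 0) <= P(E). The degrees of the vertices of K are
  independent, and each is at most 1 with probability q = (1-p)^N + Np(1-p)^(N-1). The
  vertices of C are then added one at a time: conditioning on the edges at the new vertex and
  applying Harris's inequality to the increasing events involved shows that, given E so far,
  the new vertex has degree at most 1 with probability at least q rho^|K|, where
  rho = (1-r)/(1-(1-p)r) and r is the probability of at most one success in N-1 trials.
  Hence P(E) <= (1-q)^|K| (1-q rho^|K|)^|C|. After exchanging the two parts so that
  |C| <= |K|, Bernoulli's inequality rho^N >= 1 - sigma/(1-q) and elementary estimates of
  the logarithm turn this product into the stated exponential bound.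
*)

theory Submission
  imports Defs "HOL-Analysis.Harmonic_Numbers"
begin

section \<open>Products of independent Bernoulli variables\<close>

(* A random set of edges inside a finite set I is given by its indicator function, which vanishes
   outside I; bprob p I A is the probability of A when each edge of I is present independently
   with probability p (prob_G_NNp_eq_bprob identifies it with G_NNp). *)

definition configs :: "'e set \<Rightarrow> ('e \<Rightarrow> bool) set" where
  "configs I = {G. {e. G e} \<subseteq> I}"

definition weight :: "real \<Rightarrow> 'e set \<Rightarrow> ('e \<Rightarrow> bool) \<Rightarrow> real" where
  "weight p I G = (\<Prod>e\<in>I. if G e then p else 1 - p)"

definition bprob :: "real \<Rightarrow> 'e set \<Rightarrow> ('e \<Rightarrow> bool) set \<Rightarrow> real" where
  "bprob p I A = (\<Sum>G\<in>configs I \<inter> A. weight p I G)"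

lemma configs_eq_image_Pow: "configs I = (\<lambda>X e. e \<in> X) ` Pow I"
proof
  show "configs I \<subseteq> (\<lambda>X e. e \<in> X) ` Pow I"
  proof
    fix G assume "G \<in> configs I"
    then have "G = (\<lambda>e. e \<in> {e. G e})" "{e. G e} \<in> Pow I" by (auto simp: configs_def)
    then show "G \<in> (\<lambda>X e. e \<in> X) ` Pow I" by blast
  qed
qed (auto simp: configs_def)

lemma finite_configs: "finite I \<Longrightarrow> finite (configs I)"
  by (simp add: configs_eq_image_Pow)

lemma configs_empty: "configs {} = {\<lambda>_. False}"
  by (auto simp: configs_def)

lemma configs_singleton: "configs {x} = {\<lambda>_. False, \<lambda>e. e = x}"
  by (auto simp: configs_def fun_eq_iff)

lemma weight_nonneg: "0 \<le> p \<Longrightarrow> p \<le> 1 \<Longrightarrow> 0 \<le> weight p I G"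
  unfolding weight_def by (intro prod_nonneg) auto

lemma bprob_nonneg: "0 \<le> p \<Longrightarrow> p \<le> 1 \<Longrightarrow> 0 \<le> bprob p I A"
  unfolding bprob_def by (intro sum_nonneg weight_nonneg)

lemma bprob_eq_sum_if:
  "finite I \<Longrightarrow> bprob p I A = (\<Sum>G\<in>configs I. if G \<in> A then weight p I G else 0)"
  unfolding bprob_def by (simp add: sum.inter_restrict finite_configs)

lemma override_on_bij_configs:
  assumes "M \<subseteq> I"
  shows "bij_betw (\<lambda>(S, G). override_on G S M) (configs M \<times> configs (I - M)) (configs I)"
  by (rule bij_betwI[where g = "\<lambda>G. (\<lambda>e. e \<in> M \<and> G e, \<lambda>e. e \<notin> M \<and> G e)"])
    (use assms in \<open>auto simp: configs_def override_on_def fun_eq_iff\<close>)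

lemma sum_configs_split:
  assumes "finite I" "M \<subseteq> I"
  shows "(\<Sum>G\<in>configs I. F G) = (\<Sum>S\<in>configs M. \<Sum>G\<in>configs (I - M). F (override_on G S M))"
proof -
  have "(\<Sum>G\<in>configs I. F G)
      = (\<Sum>x\<in>configs M \<times> configs (I - M). F ((\<lambda>(S, G). override_on G S M) x))"
    using sum.reindex_bij_betw[OF override_on_bij_configs[OF assms(2)], of F] by simp
  also have "\<dots> = (\<Sum>S\<in>configs M. \<Sum>G\<in>configs (I - M). F (override_on G S M))"
    by (simp add: sum.cartesian_product case_prod_beta)
  finally show ?thesis .
qed

lemma weight_override_on:
  assumes "finite I" "M \<subseteq> I"
  shows "weight p I (override_on G S M) = weight p M S * weight p (I - M) G"
proof -
  have "weight p I (override_on G S M)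
      = (\<Prod>e\<in>I - M. if override_on G S M e then p else 1 - p)
        * (\<Prod>e\<in>M. if override_on G S M e then p else 1 - p)"
    unfolding weight_def by (rule prod.subset_diff[OF assms(2,1)])
  also have "\<dots> = weight p (I - M) G * weight p M S"
    unfolding weight_def by (intro arg_cong2[where f = "(*)"] prod.cong) auto
  finally show ?thesis by simp
qed

lemma bprob_split:
  assumes "finite I" "M \<subseteq> I"
  shows "bprob p I A = (\<Sum>S\<in>configs M. weight p M S * bprob p (I - M) {G. override_on G S M \<in> A})"
  using assms finite_subset[OF assms(2,1)]
  by (simp add: bprob_eq_sum_if sum_configs_split weight_override_on sum_distrib_left if_distrib
      cong: if_cong)

lemma bprob_insert:
  assumes "finite I" "x \<notin> I"
  shows "bprob p (insert x I) A
    = (1 - p) * bprob p I {G. G(x := False) \<in> A} + p * bprob p I {G. G(x := True) \<in> A}"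
proof -
  have "(\<lambda>_. False) \<noteq> (\<lambda>e. e = x)" "insert x I - {x} = I"
    using assms(2) by (auto simp: fun_eq_iff)
  then show ?thesis
    using bprob_split[of "insert x I" "{x}" p A] assms(1)
    by (simp add: configs_singleton override_on_insert weight_def)
qed

lemma sum_configs_prod:
  fixes g :: "'e \<Rightarrow> bool \<Rightarrow> real"
  assumes "finite I"
  shows "(\<Sum>G\<in>configs I. \<Prod>e\<in>I. g e (G e)) = (\<Prod>e\<in>I. g e True + g e False)"
  using assms
proof (induction I rule: finite_induct)
  case empty
  then show ?case by (simp add: configs_empty)
next
  case (insert x I)
  have prod_override:
    "(\<Prod>e\<in>insert x I. g e (override_on G S {x} e)) = g x (S x) * (\<Prod>e\<in>I. g e (G e))" for S G
  proof -
    have "(\<Prod>e\<in>I. g e (override_on G S {x} e)) = (\<Prod>e\<in>I. g e (G e))"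
      using insert.hyps(2) by (intro prod.cong) (auto simp: override_on_def)
    then show ?thesis
      using insert.hyps by simp
  qed
  have "insert x I - {x} = I"
    using insert.hyps(2) by auto
  then have "(\<Sum>G\<in>configs (insert x I). \<Prod>e\<in>insert x I. g e (G e))
      = (\<Sum>S\<in>configs {x}. \<Sum>G\<in>configs I. \<Prod>e\<in>insert x I. g e (override_on G S {x} e))"
    using sum_configs_split[of "insert x I" "{x}"] insert.hyps(1) by simp
  also have "\<dots> = (\<Sum>S\<in>configs {x}. g x (S x) * (\<Sum>G\<in>configs I. \<Prod>e\<in>I. g e (G e)))"
    by (simp only: prod_override sum_distrib_left)
  also have "\<dots> = (g x True + g x False) * (\<Prod>e\<in>I. g e True + g e False)"
    by (simp add: configs_singleton insert.IH fun_eq_iff algebra_simps)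
  finally show ?case
    using insert.hyps by simp
qed

lemma bprob_UNIV: "finite I \<Longrightarrow> bprob p I UNIV = 1"
  unfolding bprob_def weight_def using sum_configs_prod[of I "\<lambda>e b. if b then p else 1 - p"] by simp

lemma bprob_empty: "bprob p I {} = 0"
  by (simp add: bprob_def)

lemma bprob_Int_Compl:
  assumes "finite I"
  shows "bprob p I (A \<inter> - B) = bprob p I A - bprob p I (A \<inter> B)"
proof -
  have "bprob p I A = bprob p I (A \<inter> B) + bprob p I (A \<inter> - B)"
    unfolding bprob_def
    by (subst sum.union_disjoint[symmetric]) (auto simp: finite_configs assms intro!: sum.cong)
  then show ?thesis by simp
qed

lemma bprob_Compl: "finite I \<Longrightarrow> bprob p I (- A) = 1 - bprob p I A"
  using bprob_Int_Compl[of I p UNIV A] by (simp add: bprob_UNIV)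

lemma bprob_mono:
  assumes "finite I" "0 \<le> p" "p \<le> 1" "A \<subseteq> B"
  shows "bprob p I A \<le> bprob p I B"
  unfolding bprob_def using assms
  by (intro sum_mono2 finite_Int disjI1 finite_configs weight_nonneg) auto

lemma bprob_le_1: "finite I \<Longrightarrow> 0 \<le> p \<Longrightarrow> p \<le> 1 \<Longrightarrow> bprob p I A \<le> 1"
  using bprob_mono[of I p A UNIV] by (simp add: bprob_UNIV)

lemma bprob_Int_independent:
  assumes "finite I" "M \<subseteq> I"
    and X: "\<And>G H. (\<And>e. e \<in> M \<Longrightarrow> G e = H e) \<Longrightarrow> G \<in> X \<longleftrightarrow> H \<in> X"
    and Y: "\<And>G H. (\<And>e. e \<notin> M \<Longrightarrow> G e = H e) \<Longrightarrow> G \<in> Y \<longleftrightarrow> H \<in> Y"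
  shows "bprob p I (X \<inter> Y) = bprob p M X * bprob p (I - M) Y"
proof -
  have "{G. override_on G S M \<in> X \<inter> Y} = (if S \<in> X then Y else {})" for S
  proof -
    have "override_on G S M \<in> X \<longleftrightarrow> S \<in> X" "override_on G S M \<in> Y \<longleftrightarrow> G \<in> Y" for G
      by (rule X, simp, rule Y, simp)
    then show ?thesis by auto
  qed
  then have "bprob p I (X \<inter> Y)
      = (\<Sum>S\<in>configs M. weight p M S * bprob p (I - M) (if S \<in> X then Y else {}))"
    by (simp only: bprob_split[OF assms(1,2)])
  also have "\<dots> = (\<Sum>S\<in>configs M. (if S \<in> X then weight p M S else 0) * bprob p (I - M) Y)"
    by (intro sum.cong) (simp_all add: bprob_empty)
  finally show ?thesis
    by (simp add: bprob_eq_sum_if[OF finite_subset[OF assms(2,1)]] sum_distrib_right)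
qed

lemma bprob_local:
  assumes "finite I" "M \<subseteq> I"
    and "\<And>G H. (\<And>e. e \<in> M \<Longrightarrow> G e = H e) \<Longrightarrow> G \<in> A \<longleftrightarrow> H \<in> A"
  shows "bprob p I A = bprob p M A"
  using bprob_Int_independent[OF assms, of UNIV p] assms(1) by (simp add: bprob_UNIV)

lemma card_filter_fun_upd:
  assumes "finite M" "x \<notin> M"
  shows "card {e \<in> insert x M. (G(x := b)) e} = (if b then 1 else 0) + card {e \<in> M. G e}"
proof -
  have M: "{e \<in> M. (G(x := b)) e} = {e \<in> M. G e}"
    using assms(2) by auto
  show ?thesis
  proof (cases b)
    case True
    then have "{e \<in> insert x M. (G(x := b)) e} = insert x {e \<in> M. G e}"
      using M by auto
    then show ?thesis
      using True assms by simp
  next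
    case False
    then have "{e \<in> insert x M. (G(x := b)) e} = {e \<in> M. G e}"
      using M assms(2) by auto
    then show ?thesis
      using False by simp
  qed
qed

lemma bprob_no_edge:
  assumes "finite M"
  shows "bprob p M {G. \<forall>e\<in>M. \<not> G e} = (1 - p) ^ card M"
proof -
  have "configs M \<inter> {G. \<forall>e\<in>M. \<not> G e} = {\<lambda>_. False}"
    by (auto simp: configs_def)
  then show ?thesis
    by (simp add: bprob_def weight_def)
qed

lemma bprob_at_most_one_edge:
  "finite M \<Longrightarrow> bprob p M {G. card {e \<in> M. G e} \<le> 1}
    = (1 - p) ^ card M + real (card M) * p * (1 - p) ^ (card M - 1)"
proof (induction M rule: finite_induct)
  case empty
  then show ?case by (simp add: bprob_def configs_empty weight_def)
next
  case (insert x M)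
  let ?Z = "{G. card {e \<in> insert x M. G e} \<le> 1}"
  have "{G. G(x := False) \<in> ?Z} = {G. card {e \<in> M. G e} \<le> 1}"
    "{G. G(x := True) \<in> ?Z} = {G. \<forall>e\<in>M. \<not> G e}"
    using card_filter_fun_upd[OF insert.hyps] insert.hyps(1) by auto
  then have "bprob p (insert x M) ?Z
      = (1 - p) * ((1 - p) ^ card M + real (card M) * p * (1 - p) ^ (card M - 1))
        + p * (1 - p) ^ card M"
    using bprob_insert[OF insert.hyps, of p ?Z]
    by (simp only: insert.IH bprob_no_edge[OF insert.hyps(1)])
  also have "\<dots> = (1 - p) ^ Suc (card M) + real (Suc (card M)) * p * (1 - p) ^ card M"
    by (cases "card M") (simp_all add: algebra_simps)
  finally show ?case
    using insert by simp
qed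

lemma prob_G_NNp_eq_bprob:
  assumes "0 \<le> p" "p \<le> 1"
  shows "measure_pmf.prob (G_NNp N p) A = bprob p ({..<N} \<times> {..<N}) A"
proof -
  let ?I = "{..<N} \<times> {..<N}"
  have "set_pmf (G_NNp N p) \<subseteq> configs ?I"
    unfolding G_NNp_def using set_Pi_pmf_subset[of ?I False] by (auto simp: configs_def)
  then have "measure_pmf.prob (G_NNp N p) A = measure_pmf.prob (G_NNp N p) (configs ?I \<inter> A)"
    by (metis (no_types, lifting) Int_absorb2 inf_assoc inf_commute measure_Int_set_pmf)
  also have "\<dots> = sum (pmf (G_NNp N p)) (configs ?I \<inter> A)"
    by (simp add: measure_measure_pmf_finite finite_configs)
  also have "\<dots> = bprob p ?I A"
    unfolding bprob_def using assms
    by (intro sum.cong refl) (auto simp: G_NNp_def pmf_Pi configs_def weight_def intro!: prod.cong)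
  finally show ?thesis .
qed

lemma sum_weight_prod_eq_1:
  fixes h :: "'e \<Rightarrow> bool \<Rightarrow> real"
  assumes "finite M" "\<And>e. e \<in> M \<Longrightarrow> p * h e True + (1 - p) * h e False = 1"
  shows "(\<Sum>S\<in>configs M. weight p M S * (\<Prod>e\<in>M. h e (S e))) = 1"
proof -
  have "(\<Sum>S\<in>configs M. weight p M S * (\<Prod>e\<in>M. h e (S e)))
      = (\<Sum>S\<in>configs M. \<Prod>e\<in>M. (if S e then p else 1 - p) * h e (S e))"
    by (simp add: weight_def prod.distrib)
  also have "\<dots> = (\<Prod>e\<in>M. p * h e True + (1 - p) * h e False)"
    using sum_configs_prod[OF assms(1), of "\<lambda>e b. (if b then p else 1 - p) * h e b"] by simp
  also have "\<dots> = 1"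
    using assms(2) by simp
  finally show ?thesis .
qed

section \<open>Harris's inequality\<close>

definition up_closed :: "('e \<Rightarrow> bool) set \<Rightarrow> bool" where
  "up_closed A \<longleftrightarrow> (\<forall>G\<in>A. \<forall>H. G \<le> H \<longrightarrow> H \<in> A)"

lemma up_closedD: "up_closed A \<Longrightarrow> G \<in> A \<Longrightarrow> G \<le> H \<Longrightarrow> H \<in> A"
  unfolding up_closed_def by blast

lemma up_closed_fun_upd: "up_closed A \<Longrightarrow> up_closed {G. G(x := b) \<in> A}"
  unfolding up_closed_def le_fun_def by (auto elim!: ballE allE)

lemma up_closed_override_on: "up_closed A \<Longrightarrow> up_closed {G. override_on G S M \<in> A}"
  unfolding up_closed_def le_fun_def override_on_def by (auto elim!: ballE allE)

lemma card_filter_mono: "finite R \<Longrightarrow> G \<le> H \<Longrightarrow> card {e \<in> R. G e} \<le> card {e \<in> R. H e}"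
  by (intro card_mono) (auto simp: le_fun_def)

lemma up_closed_card_ge: "finite R \<Longrightarrow> up_closed {G. k \<le> card {e \<in> R. G e}}"
  unfolding up_closed_def using card_filter_mono by (blast intro: order.trans)

lemma two_point_chebyshev:
  fixes a0 a1 b0 b1 p :: real
  assumes "0 \<le> p" "p \<le> 1" "a0 \<le> a1" "b0 \<le> b1"
  shows "((1 - p) * a0 + p * a1) * ((1 - p) * b0 + p * b1) \<le> (1 - p) * (a0 * b0) + p * (a1 * b1)"
proof -
  have "(1 - p) * (a0 * b0) + p * (a1 * b1) - ((1 - p) * a0 + p * a1) * ((1 - p) * b0 + p * b1)
        = p * (1 - p) * ((a1 - a0) * (b1 - b0))"
    by (simp add: algebra_simps)
  also have "\<dots> \<ge> 0"
    using assms by simp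
  finally show ?thesis by simp
qed

theorem harris_inequality:
  assumes "finite I" "0 \<le> p" "p \<le> 1" "up_closed A" "up_closed B"
  shows "bprob p I A * bprob p I B \<le> bprob p I (A \<inter> B)"
  using assms(1,4,5)
proof (induction I arbitrary: A B rule: finite_induct)
  case empty
  then show ?case
    by (cases "(\<lambda>_. False) \<in> A"; cases "(\<lambda>_. False) \<in> B")
      (simp_all add: bprob_def configs_empty weight_def)
next
  case (insert x I)
  let ?A0 = "{G. G(x := False) \<in> A}" and ?A1 = "{G. G(x := True) \<in> A}"
  let ?B0 = "{G. G(x := False) \<in> B}" and ?B1 = "{G. G(x := True) \<in> B}"
  have "?A0 \<subseteq> ?A1" "?B0 \<subseteq> ?B1"
    using insert.prems by (auto elim!: up_closedD simp: le_fun_def)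
  then have "bprob p I ?A0 \<le> bprob p I ?A1" "bprob p I ?B0 \<le> bprob p I ?B1"
    using insert.hyps(1) assms(2,3) by (auto intro: bprob_mono)
  then have "bprob p (insert x I) A * bprob p (insert x I) B \<le>
      (1 - p) * (bprob p I ?A0 * bprob p I ?B0) + p * (bprob p I ?A1 * bprob p I ?B1)"
    using two_point_chebyshev assms(2,3) by (simp add: bprob_insert[OF insert.hyps])
  also have "\<dots> \<le> (1 - p) * bprob p I (?A0 \<inter> ?B0) + p * bprob p I (?A1 \<inter> ?B1)"
    using insert.IH insert.prems assms(2,3)
    by (intro add_mono mult_left_mono) (auto intro: up_closed_fun_upd)
  also have "\<dots> = bprob p (insert x I) (A \<inter> B)"
    by (simp add: bprob_insert[OF insert.hyps] Collect_conj_eq)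
  finally show ?case .
qed

corollary harris_inequality_Inter:
  assumes "finite I" "0 \<le> p" "p \<le> 1" "up_closed E"
    and "finite C" "\<And>v. v \<in> C \<Longrightarrow> up_closed (U v)"
  shows "bprob p I E * (\<Prod>v\<in>C. bprob p I (U v)) \<le> bprob p I (E \<inter> (\<Inter>v\<in>C. U v))"
  using assms(5,6)
proof (induction C rule: finite_induct)
  case empty
  then show ?case by simp
next
  case (insert x C)
  have "up_closed (E \<inter> (\<Inter>v\<in>C. U v))"
    using insert.prems assms(4) unfolding up_closed_def by blast
  then have "bprob p I (E \<inter> (\<Inter>v\<in>C. U v)) * bprob p I (U x)
      \<le> bprob p I (E \<inter> (\<Inter>v\<in>C. U v) \<inter> U x)"
    using harris_inequality[OF assms(1-3)] insert.prems by simp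
  also have "E \<inter> (\<Inter>v\<in>C. U v) \<inter> U x = E \<inter> (\<Inter>v\<in>insert x C. U v)"
    by auto
  finally have "bprob p I (E \<inter> (\<Inter>v\<in>C. U v)) * bprob p I (U x)
      \<le> bprob p I (E \<inter> (\<Inter>v\<in>insert x C. U v))" .
  moreover have "bprob p I E * (\<Prod>v\<in>C. bprob p I (U v)) * bprob p I (U x)
      \<le> bprob p I (E \<inter> (\<Inter>v\<in>C. U v)) * bprob p I (U x)"
    using insert assms(2,3) by (intro mult_right_mono bprob_nonneg) auto
  ultimately show ?case
    using insert.hyps by (simp add: algebra_simps)
qed

lemma bprob_Int_ge_section:
  assumes "finite I" "M \<subseteq> I" "0 \<le> p" "p \<le> 1" "up_closed A"
    and B: "\<And>G H. (\<And>e. e \<in> M \<Longrightarrow> G e = H e) \<Longrightarrow> G \<in> B \<longleftrightarrow> H \<in> B"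
  shows "bprob p M B * bprob p (I - M) {G. override_on G (\<lambda>_. False) M \<in> A} \<le> bprob p I (A \<inter> B)"
proof -
  let ?m = "bprob p (I - M) {G. override_on G (\<lambda>_. False) M \<in> A}"
  have section_ge:
    "(if S \<in> B then ?m else 0) \<le> bprob p (I - M) {G. override_on G S M \<in> A \<inter> B}" for S
  proof (cases "S \<in> B")
    case True
    have "override_on G S M \<in> B" for G
      using B[of "override_on G S M" S] True by simp
    moreover have "override_on G (\<lambda>_. False) M \<le> override_on G S M" for G
      by (simp add: le_fun_def override_on_def)
    ultimately have "{G. override_on G (\<lambda>_. False) M \<in> A} \<subseteq> {G. override_on G S M \<in> A \<inter> B}"
      using up_closedD[OF assms(5)] by blast
    then show ?thesis
      using True assms(1,3,4) by (simp add: bprob_mono)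
  next
    case False
    then show ?thesis
      using assms(3,4) by (simp add: bprob_nonneg)
  qed
  have "bprob p M B * ?m = (\<Sum>S\<in>configs M. (if S \<in> B then weight p M S else 0) * ?m)"
    using finite_subset[OF assms(2,1)] by (simp only: bprob_eq_sum_if sum_distrib_right)
  also have "\<dots> = (\<Sum>S\<in>configs M. weight p M S * (if S \<in> B then ?m else 0))"
    by (intro sum.cong) auto
  also have "\<dots> \<le> (\<Sum>S\<in>configs M. weight p M S * bprob p (I - M) {G. override_on G S M \<in> A \<inter> B})"
    by (intro sum_mono mult_left_mono section_ge weight_nonneg assms(3,4))
  also have "\<dots> = bprob p I (A \<inter> B)"
    by (rule bprob_split[OF assms(1,2), symmetric])
  finally show ?thesis .
qed

section \<open>Degree events in the random bipartite graph\<close>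

definition row_edges :: "nat \<Rightarrow> nat \<Rightarrow> (nat \<times> nat) set" where
  "row_edges N i = {i} \<times> {..<N}"

definition col_edges :: "nat \<Rightarrow> nat \<Rightarrow> (nat \<times> nat) set" where
  "col_edges N j = {..<N} \<times> {j}"

definition deg2_event :: "nat \<Rightarrow> nat set \<Rightarrow> nat set \<Rightarrow> (nat \<times> nat \<Rightarrow> bool) set" where
  "deg2_event N K C =
    {G. (\<forall>i\<in>K. 2 \<le> card {e \<in> row_edges N i. G e}) \<and> (\<forall>j\<in>C. 2 \<le> card {e \<in> col_edges N j. G e})}"

definition low_deg_prob :: "nat \<Rightarrow> real \<Rightarrow> real" where
  "low_deg_prob N p = (1 - p) ^ N + real N * p * (1 - p) ^ (N - 1)"

lemma finite_row_edges [simp]: "finite (row_edges N i)"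
  and finite_col_edges [simp]: "finite (col_edges N j)"
  and card_row_edges [simp]: "card (row_edges N i) = N"
  and card_col_edges [simp]: "card (col_edges N j) = N"
  by (simp_all add: row_edges_def col_edges_def card_cartesian_product)

lemma row_edges_subset: "i < N \<Longrightarrow> row_edges N i \<subseteq> {..<N} \<times> {..<N}"
  and col_edges_subset: "j < N \<Longrightarrow> col_edges N j \<subseteq> {..<N} \<times> {..<N}"
  by (auto simp: row_edges_def col_edges_def)

lemma card_row_edges_Diff_col_edges:
  assumes "i < N" "j < N"
  shows "card (row_edges N i - col_edges N j) = N - 1"
proof -
  have "row_edges N i - col_edges N j = {i} \<times> ({..<N} - {j})"
    using assms by (auto simp: row_edges_def col_edges_def)
  with assms show ?thesis
    by (simp add: card_cartesian_product)
qed

lemma bip_degree_Inl: "bip_degree N G (Inl i) = card {e \<in> row_edges N i. G e}"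
proof -
  have "{e \<in> row_edges N i. G e} = Pair i ` {j \<in> {..<N}. G (i, j)}"
    by (auto simp: row_edges_def)
  then show ?thesis
    by (simp add: card_image inj_on_def)
qed

lemma bip_degree_Inr: "bip_degree N G (Inr j) = card {e \<in> col_edges N j. G e}"
proof -
  have "{e \<in> col_edges N j. G e} = (\<lambda>i. (i, j)) ` {i \<in> {..<N}. G (i, j)}"
    by (auto simp: col_edges_def)
  then show ?thesis
    by (simp add: card_image inj_on_def)
qed

lemma low_deg_prob_eq_bprob:
  "finite M \<Longrightarrow> bprob p M {G. card {e \<in> M. G e} \<le> 1} = low_deg_prob (card M) p"
  unfolding low_deg_prob_def by (rule bprob_at_most_one_edge)

lemma low_deg_prob_bounds:
  assumes "0 \<le> p" "p \<le> 1"
  shows "0 \<le> low_deg_prob N p" "low_deg_prob N p \<le> 1"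
proof -
  have "low_deg_prob N p = bprob p (row_edges N 0) {G. card {e \<in> row_edges N 0. G e} \<le> 1}"
    using low_deg_prob_eq_bprob[of "row_edges N 0" p] by simp
  then show "0 \<le> low_deg_prob N p" "low_deg_prob N p \<le> 1"
    using bprob_nonneg[OF assms] bprob_le_1[OF finite_row_edges assms] by simp_all
qed

lemma low_deg_prob_pos: "p < 1 \<Longrightarrow> 0 \<le> p \<Longrightarrow> 0 < low_deg_prob N p"
  unfolding low_deg_prob_def by (intro add_pos_nonneg) auto

lemma low_deg_prob_less_1:
  assumes "0 < p" "p \<le> 1" "2 \<le> N"
  shows "low_deg_prob N p < 1"
proof -
  let ?D = "{G. card {e \<in> row_edges N 0. G e} \<le> 1}" and ?G = "\<lambda>e. e \<in> row_edges N 0"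
  have "?G \<in> configs (row_edges N 0) \<inter> - ?D"
    using assms by (auto simp: configs_def)
  then have "weight p (row_edges N 0) ?G \<le> bprob p (row_edges N 0) (- ?D)"
    unfolding bprob_def using assms
    by (intro member_le_sum) (auto intro: weight_nonneg simp: finite_configs)
  moreover have "weight p (row_edges N 0) ?G = p ^ N"
    by (simp add: weight_def)
  ultimately have "p ^ N \<le> 1 - low_deg_prob N p"
    using bprob_Compl[of "row_edges N 0" p ?D] low_deg_prob_eq_bprob[of "row_edges N 0" p] by simp
  moreover have "0 < p ^ N"
    using assms by simp
  ultimately show ?thesis
    by linarith
qed

lemma low_deg_prob_Suc:
  "low_deg_prob (Suc N) p = (1 - p) * low_deg_prob N p + p * (1 - p) ^ N"
  by (cases N) (simp_all add: low_deg_prob_def algebra_simps)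

lemma up_closed_deg2_event: "up_closed (deg2_event N K C)"
proof (unfold up_closed_def, intro ballI allI impI)
  fix G H :: "nat \<times> nat \<Rightarrow> bool"
  assume "G \<in> deg2_event N K C" "G \<le> H"
  then show "H \<in> deg2_event N K C"
    unfolding deg2_event_def by (auto intro: le_trans[OF _ card_filter_mono[OF _ \<open>G \<le> H\<close>]])
qed

lemma deg2_event_insert_row:
    "deg2_event N (insert i K) C = deg2_event N K C \<inter> - {G. card {e \<in> row_edges N i. G e} \<le> 1}"
  and deg2_event_insert_col:
    "deg2_event N K (insert j C) = deg2_event N K C \<inter> - {G. card {e \<in> col_edges N j. G e} \<le> 1}"
  by (auto simp: deg2_event_def)

lemma bprob_deg2_event_rows:
  assumes "0 \<le> p" "p \<le> 1" "finite K" "K \<subseteq> {..<N}"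
  shows "bprob p ({..<N} \<times> {..<N}) (deg2_event N K {}) = (1 - low_deg_prob N p) ^ card K"
  using assms(3,4)
proof (induction K rule: finite_induct)
  case empty
  have "deg2_event N {} {} = UNIV"
    by (simp add: deg2_event_def)
  then show ?case
    by (simp add: bprob_UNIV)
next
  case (insert i K)
  let ?I = "{..<N} \<times> {..<N}" and ?E = "deg2_event N K {}"
    and ?D = "{G. card {e \<in> row_edges N i. G e} \<le> 1}"
  have row: "row_edges N i \<subseteq> ?I"
    using insert.prems by (simp add: row_edges_subset)
  have D_local: "G \<in> ?D \<longleftrightarrow> H \<in> ?D" if "\<And>e. e \<in> row_edges N i \<Longrightarrow> G e = H e" for G H
  proof -
    have "{e \<in> row_edges N i. G e} = {e \<in> row_edges N i. H e}"
      using that by auto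
    then show ?thesis by simp
  qed
  have E_outside: "G \<in> ?E \<longleftrightarrow> H \<in> ?E" if "\<And>e. e \<notin> row_edges N i \<Longrightarrow> G e = H e" for G H
  proof -
    have "row_edges N i' \<inter> row_edges N i = {}" if "i' \<in> K" for i'
      using that insert.hyps(2) by (auto simp: row_edges_def)
    then have "{e \<in> row_edges N i'. G e} = {e \<in> row_edges N i'. H e}" if "i' \<in> K" for i'
      using that \<open>\<And>e. e \<notin> row_edges N i \<Longrightarrow> G e = H e\<close> by blast
    then show ?thesis
      by (simp add: deg2_event_def)
  qed
  have "bprob p ?I (?D \<inter> ?E) = bprob p (row_edges N i) ?D * bprob p (?I - row_edges N i) ?E"
    by (rule bprob_Int_independent[OF _ row D_local E_outside]) simp
  moreover have
    "bprob p ?I (UNIV \<inter> ?E) = bprob p (row_edges N i) UNIV * bprob p (?I - row_edges N i) ?E"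
    by (rule bprob_Int_independent[OF _ row _ E_outside]) simp_all
  moreover have "bprob p (row_edges N i) ?D = low_deg_prob N p"
    using low_deg_prob_eq_bprob[of "row_edges N i" p] by simp
  ultimately have "bprob p ?I (?E \<inter> ?D) = low_deg_prob N p * bprob p ?I ?E"
    by (simp add: bprob_UNIV Int_commute)
  moreover have "bprob p ?I (deg2_event N (insert i K) {}) = bprob p ?I ?E - bprob p ?I (?E \<inter> ?D)"
    unfolding deg2_event_insert_row by (rule bprob_Int_Compl) simp
  ultimately show ?case
    using insert.IH insert.prems insert.hyps by (simp add: left_diff_distrib)
qed

lemma bprob_permute:
  assumes "finite I" "bij \<pi>" "\<pi> ` I = I"
  shows "bprob p I {G. G \<circ> \<pi> \<in> A} = bprob p I A"
proof -
  have inj: "inj_on \<pi> I"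
    using assms(2) bij_is_inj inj_on_subset by blast
  have weight_comp: "weight p I (G \<circ> \<pi>) = weight p I G" for G
  proof -
    have "weight p I (G \<circ> \<pi>) = (\<Prod>e\<in>\<pi> ` I. if G e then p else 1 - p)"
      unfolding weight_def using inj by (simp add: prod.reindex)
    then show ?thesis
      by (simp add: assms(3) weight_def)
  qed
  have inv_cancel: "inv \<pi> \<circ> \<pi> = id" "\<pi> \<circ> inv \<pi> = id"
    using assms(2) by (simp_all add: bij_is_inj inv_o_cancel bij_is_surj[THEN surj_iff[THEN iffD1]])
  have "bij_betw (\<lambda>G. G \<circ> \<pi>) (configs I \<inter> {G. G \<circ> \<pi> \<in> A}) (configs I \<inter> A)"
  proof (rule bij_betwI[where g = "\<lambda>G. G \<circ> inv \<pi>"])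
    have "\<pi> e \<in> I \<longleftrightarrow> e \<in> I" for e
      using assms(2,3) by (metis bij_is_inj image_iff inj_image_mem_iff)
    moreover have "inv \<pi> e \<in> I \<longleftrightarrow> e \<in> I" for e
      using assms(2,3) by (metis bij_inv_eq_iff image_iff)
    ultimately show "(\<lambda>G. G \<circ> \<pi>) \<in> configs I \<inter> {G. G \<circ> \<pi> \<in> A} \<rightarrow> configs I \<inter> A"
      and "(\<lambda>G. G \<circ> inv \<pi>) \<in> configs I \<inter> A \<rightarrow> configs I \<inter> {G. G \<circ> \<pi> \<in> A}"
      by (auto simp: configs_def comp_assoc inv_cancel)
  qed (simp_all add: comp_assoc inv_cancel)
  then have "bprob p I A = (\<Sum>G\<in>configs I \<inter> {G. G \<circ> \<pi> \<in> A}. weight p I (G \<circ> \<pi>))"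
    unfolding bprob_def by (rule sum.reindex_bij_betw[symmetric])
  then show ?thesis
    by (simp add: bprob_def weight_comp)
qed

lemma card_row_edges_swap:
  "card {e \<in> row_edges N i. (G \<circ> prod.swap) e} = card {e \<in> col_edges N i. G e}"
proof -
  have "{e \<in> row_edges N i. (G \<circ> prod.swap) e} = prod.swap ` {e \<in> col_edges N i. G e}"
    by (auto simp: row_edges_def col_edges_def image_iff)
  then show ?thesis
    by (simp add: card_image)
qed

lemma deg2_event_swap: "G \<circ> prod.swap \<in> deg2_event N K C \<longleftrightarrow> G \<in> deg2_event N C K"
  using card_row_edges_swap[of N _ G] card_row_edges_swap[of N _ "G \<circ> prod.swap"]
  by (auto simp: deg2_event_def comp_assoc)

lemma bprob_deg2_event_commute:
  "bprob p ({..<N} \<times> {..<N}) (deg2_event N K C) = bprob p ({..<N} \<times> {..<N}) (deg2_event N C K)"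
proof -
  have "deg2_event N K C = {G. G \<circ> prod.swap \<in> deg2_event N C K}"
    by (simp add: deg2_event_swap)
  then show ?thesis
    by (simp add: bprob_permute product_swap)
qed

section \<open>Adding one vertex of the second part\<close>

(* low_deg_prob (N - 1) p is the probability that a row has at most one edge outside a given
   column. *)
definition rho_factor :: "nat \<Rightarrow> real \<Rightarrow> real" where
  "rho_factor N p = (1 - low_deg_prob (N - 1) p) / (1 - (1 - p) * low_deg_prob (N - 1) p)"

lemma rho_factor_denominator_pos:
  assumes "0 < p" "p \<le> 1"
  shows "0 < 1 - (1 - p) * low_deg_prob N p"
proof -
  have "(1 - p) * low_deg_prob N p \<le> (1 - p) * 1"
    using assms low_deg_prob_bounds[of p N] by (intro mult_left_mono) auto
  then show ?thesis
    using assms by simp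
qed

lemma rho_factor_bounds:
  assumes "0 < p" "p \<le> 1"
  shows "0 \<le> rho_factor N p" "rho_factor N p \<le> 1"
proof -
  let ?r = "low_deg_prob (N - 1) p"
  have "0 < 1 - (1 - p) * ?r" "0 \<le> ?r" "?r \<le> 1"
    using rho_factor_denominator_pos[OF assms] low_deg_prob_bounds[of p "N - 1"] assms by auto
  moreover have "(1 - p) * ?r \<le> 1 * ?r"
    using assms \<open>0 \<le> ?r\<close> by (intro mult_right_mono) auto
  ultimately show "0 \<le> rho_factor N p" "rho_factor N p \<le> 1"
    by (simp_all add: rho_factor_def divide_le_eq_1_pos)
qed

lemma bprob_row_Diff_col_ge_2:
  assumes "i < N" "j < N"
  shows "bprob p ({..<N} \<times> {..<N} - col_edges N j)
      {G. 2 \<le> card {e \<in> row_edges N i - col_edges N j. G e}} = 1 - low_deg_prob (N - 1) p"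
proof -
  let ?J = "row_edges N i - col_edges N j"
  have "bprob p ({..<N} \<times> {..<N} - col_edges N j) {G. 2 \<le> card {e \<in> ?J. G e}}
      = bprob p ?J {G. 2 \<le> card {e \<in> ?J. G e}}"
  proof (rule bprob_local)
    show "?J \<subseteq> {..<N} \<times> {..<N} - col_edges N j"
      using row_edges_subset[OF assms(1)] by blast
    fix G H :: "nat \<times> nat \<Rightarrow> bool"
    assume "\<And>e. e \<in> ?J \<Longrightarrow> G e = H e"
    then have "{e \<in> ?J. G e} = {e \<in> ?J. H e}"
      by auto
    then show "G \<in> {G. 2 \<le> card {e \<in> ?J. G e}} \<longleftrightarrow> H \<in> {G. 2 \<le> card {e \<in> ?J. G e}}"
      by simp
  qed simp
  moreover have "bprob p ?J {G. 2 \<le> card {e \<in> ?J. G e}} = 1 - low_deg_prob (N - 1) p"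
  proof -
    have "{G. 2 \<le> card {e \<in> ?J. G e}} = - {G. card {e \<in> ?J. G e} \<le> 1}"
      by auto
    then have "bprob p ?J {G. 2 \<le> card {e \<in> ?J. G e}} = 1 - low_deg_prob (card ?J) p"
      by (simp only: bprob_Compl low_deg_prob_eq_bprob finite_Diff finite_row_edges)
    then show ?thesis
      using assms by (simp only: card_row_edges_Diff_col_edges)
  qed
  ultimately show ?thesis
    by simp
qed

lemma deg2_event_section_subset:
  assumes "j \<notin> C"
  shows "{G. override_on G S (col_edges N j) \<in> deg2_event N K C}
      \<inter> (\<Inter>e\<in>{e \<in> K \<times> {j}. S e}. {G. 2 \<le> card {e' \<in> row_edges N (fst e) - col_edges N j. G e'}})
    \<subseteq> {G. override_on G (\<lambda>_. False) (col_edges N j) \<in> deg2_event N K C}"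
proof
  let ?M = "col_edges N j"
  fix G
  assume "G \<in> {G. override_on G S ?M \<in> deg2_event N K C}
      \<inter> (\<Inter>e\<in>{e \<in> K \<times> {j}. S e}. {G. 2 \<le> card {e' \<in> row_edges N (fst e) - ?M. G e'}})"
  then have G: "override_on G S ?M \<in> deg2_event N K C"
    and rows: "\<And>i. i \<in> K \<Longrightarrow> S (i, j) \<Longrightarrow> 2 \<le> card {e \<in> row_edges N i - ?M. G e}"
    by auto
  have "2 \<le> card {e \<in> row_edges N i. override_on G (\<lambda>_. False) ?M e}" if "i \<in> K" for i
  proof (cases "S (i, j)")
    case True
    have "{e \<in> row_edges N i. override_on G (\<lambda>_. False) ?M e} = {e \<in> row_edges N i - ?M. G e}"
      by (auto simp: override_on_def)
    then show ?thesis
      using rows True \<open>i \<in> K\<close> by simp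
  next
    case False
    then have "{e \<in> row_edges N i. override_on G (\<lambda>_. False) ?M e}
        = {e \<in> row_edges N i. override_on G S ?M e}"
      by (auto simp: override_on_def row_edges_def col_edges_def)
    then show ?thesis
      using G \<open>i \<in> K\<close> by (simp add: deg2_event_def)
  qed
  moreover have "2 \<le> card {e \<in> col_edges N j'. override_on G (\<lambda>_. False) ?M e}" if "j' \<in> C" for j'
  proof -
    have "{e \<in> col_edges N j'. override_on G (\<lambda>_. False) ?M e}
        = {e \<in> col_edges N j'. override_on G S ?M e}"
      using that assms by (auto simp: override_on_def col_edges_def)
    then show ?thesis
      using G that by (simp add: deg2_event_def)
  qed
  ultimately show "G \<in> {G. override_on G (\<lambda>_. False) ?M \<in> deg2_event N K C}"
    by (simp add: deg2_event_def)
qed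

(* A row of K that meets the column j in the configuration S keeps degree at least 2 when the
   column is emptied, as soon as it has two further edges; Harris's inequality pays for these
   increasing events separately. *)
lemma harris_bound_deg2_section:
  assumes "0 \<le> p" "p \<le> 1" "j < N" "j \<notin> C" "K \<subseteq> {..<N}"
  defines "I' \<equiv> {..<N} \<times> {..<N} - col_edges N j"
  shows "(1 - low_deg_prob (N - 1) p) ^ card {e \<in> K \<times> {j}. S e}
      * bprob p I' {G. override_on G S (col_edges N j) \<in> deg2_event N K C}
    \<le> bprob p I' {G. override_on G (\<lambda>_. False) (col_edges N j) \<in> deg2_event N K C}"
proof -
  let ?E = "\<lambda>S. {G. override_on G S (col_edges N j) \<in> deg2_event N K C}"
  let ?U = "\<lambda>e. {G. 2 \<le> card {e' \<in> row_edges N (fst e) - col_edges N j. G e'}}"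
  let ?KS = "{e \<in> K \<times> {j}. S e}"
  have "finite ?KS"
    using finite_subset[OF assms(5)] by auto
  have "(\<Prod>e\<in>?KS. bprob p I' (?U e)) = (\<Prod>e\<in>?KS. 1 - low_deg_prob (N - 1) p)"
  proof (rule prod.cong[OF refl])
    fix e
    assume "e \<in> ?KS"
    then have "fst e < N"
      using assms(5) by auto
    then show "bprob p I' (?U e) = 1 - low_deg_prob (N - 1) p"
      unfolding I'_def by (rule bprob_row_Diff_col_ge_2[OF _ assms(3)])
  qed
  then have "(1 - low_deg_prob (N - 1) p) ^ card ?KS = (\<Prod>e\<in>?KS. bprob p I' (?U e))"
    by simp
  moreover have "bprob p I' (?E S) * (\<Prod>e\<in>?KS. bprob p I' (?U e))
      \<le> bprob p I' (?E S \<inter> (\<Inter>e\<in>?KS. ?U e))"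
    by (intro harris_inequality_Inter up_closed_override_on up_closed_deg2_event up_closed_card_ge)
      (simp_all add: I'_def assms(1,2) \<open>finite ?KS\<close>)
  ultimately have "(1 - low_deg_prob (N - 1) p) ^ card ?KS * bprob p I' (?E S)
      \<le> bprob p I' (?E S \<inter> (\<Inter>e\<in>?KS. ?U e))"
    by (simp only: mult.commute)
  also have "\<dots> \<le> bprob p I' (?E (\<lambda>_. False))"
    using deg2_event_section_subset[OF assms(4)] assms(1,2)
    by (intro bprob_mono) (simp_all add: I'_def)
  finally show ?thesis .
qed

lemma bprob_deg2_event_le_empty_col:
  assumes "0 < p" "p \<le> 1" "j < N" "j \<notin> C" "K \<subseteq> {..<N}"
  defines "I \<equiv> {..<N} \<times> {..<N}"
  shows "rho_factor N p ^ card K * bprob p I (deg2_event N K C)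
    \<le> bprob p (I - col_edges N j) {G. override_on G (\<lambda>_. False) (col_edges N j) \<in> deg2_event N K C}"
proof -
  let ?M = "col_edges N j" and ?Kj = "K \<times> {j}"
  let ?E = "\<lambda>S. {G. override_on G S ?M \<in> deg2_event N K C}"
  define r where "r = low_deg_prob (N - 1) p"
  define \<rho> where "\<rho> = rho_factor N p"
  define d where "d = 1 / (1 - (1 - p) * r)"
  define h where "h e b = (if e \<in> ?Kj then if b then d else \<rho> else 1)" for e b
  have "0 < 1 - (1 - p) * r"
    unfolding r_def using rho_factor_denominator_pos assms(1,2) .
  then have d_pos: "0 < d"
    by (simp add: d_def)
  have \<rho>_eq: "\<rho> = (1 - r) * d"
    by (simp add: \<rho>_def rho_factor_def d_def r_def)
  have "p * d + (1 - p) * \<rho> = (1 - (1 - p) * r) * d"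
    by (simp add: \<rho>_eq algebra_simps)
  then have mean_one: "p * d + (1 - p) * \<rho> = 1"
    using \<open>0 < 1 - (1 - p) * r\<close> by (simp add: d_def)
  have \<rho>_nonneg: "0 \<le> \<rho>"
    using rho_factor_bounds assms(1,2) by (simp add: \<rho>_def)
  have Kj: "?Kj \<subseteq> ?M" "card ?Kj = card K"
    using assms(5) by (auto simp: col_edges_def card_cartesian_product)
  \<comment> \<open>The factors h e (S e) split \<open>\<rho> ^ card K\<close> against the Harris bound for the
    configuration S of the column, and have mean one, so averaging over S loses nothing.\<close>
  have per_section: "\<rho> ^ card K * bprob p (I - ?M) (?E S)
      \<le> (\<Prod>e\<in>?M. h e (S e)) * bprob p (I - ?M) (?E (\<lambda>_. False))" for S
  proof -
    have "\<rho> ^ card K = (\<Prod>e\<in>?M. if e \<in> ?Kj then \<rho> else 1)"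
      using Kj by (simp add: prod.If_cases Int_absorb1)
    also have "\<dots> = (\<Prod>e\<in>?M. h e (S e) * (if e \<in> ?Kj \<and> S e then 1 - r else 1))"
      by (intro prod.cong) (auto simp: h_def \<rho>_eq)
    also have "\<dots> = (\<Prod>e\<in>?M. h e (S e)) * (1 - r) ^ card {e \<in> ?Kj. S e}"
    proof -
      have "?M \<inter> {e. e \<in> ?Kj \<and> S e} = {e \<in> ?Kj. S e}"
        using Kj(1) by blast
      then show ?thesis
        by (simp add: prod.distrib prod.If_cases)
    qed
    finally have "\<rho> ^ card K * bprob p (I - ?M) (?E S)
        = (\<Prod>e\<in>?M. h e (S e)) * ((1 - r) ^ card {e \<in> ?Kj. S e} * bprob p (I - ?M) (?E S))"
      by simp
    also have "\<dots> \<le> (\<Prod>e\<in>?M. h e (S e)) * bprob p (I - ?M) (?E (\<lambda>_. False))"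
      using harris_bound_deg2_section[OF less_imp_le[OF assms(1)] assms(2-5)] d_pos \<rho>_nonneg
      by (intro mult_left_mono prod_nonneg) (auto simp: I_def r_def h_def)
    finally show ?thesis .
  qed
  have "bprob p I (deg2_event N K C) = (\<Sum>S\<in>configs ?M. weight p ?M S * bprob p (I - ?M) (?E S))"
    by (rule bprob_split) (simp_all add: I_def col_edges_subset[OF assms(3)])
  then have "\<rho> ^ card K * bprob p I (deg2_event N K C)
      = (\<Sum>S\<in>configs ?M. weight p ?M S * (\<rho> ^ card K * bprob p (I - ?M) (?E S)))"
    by (simp only: sum_distrib_left mult.left_commute)
  also have "\<dots> \<le> (\<Sum>S\<in>configs ?M. weight p ?M S * (\<Prod>e\<in>?M. h e (S e)))
      * bprob p (I - ?M) (?E (\<lambda>_. False))"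
    unfolding sum_distrib_right mult.assoc
    using assms(1,2) by (intro sum_mono mult_left_mono per_section weight_nonneg) auto
  also have "(\<Sum>S\<in>configs ?M. weight p ?M S * (\<Prod>e\<in>?M. h e (S e))) = 1"
    by (rule sum_weight_prod_eq_1) (simp_all add: h_def mean_one)
  finally show ?thesis
    by (simp add: \<rho>_def)
qed

lemma bprob_deg2_event_low_col:
  assumes "0 < p" "p \<le> 1" "j < N" "j \<notin> C" "K \<subseteq> {..<N}"
  defines "I \<equiv> {..<N} \<times> {..<N}"
  shows "low_deg_prob N p * rho_factor N p ^ card K * bprob p I (deg2_event N K C)
    \<le> bprob p I (deg2_event N K C \<inter> {G. card {e \<in> col_edges N j. G e} \<le> 1})"
proof -
  let ?M = "col_edges N j" and ?E = "deg2_event N K C"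
  let ?L = "{G. card {e \<in> ?M. G e} \<le> 1}"
  let ?m = "bprob p (I - ?M) {G. override_on G (\<lambda>_. False) ?M \<in> ?E}"
  have "low_deg_prob N p * (rho_factor N p ^ card K * bprob p I ?E) \<le> low_deg_prob N p * ?m"
    using bprob_deg2_event_le_empty_col[OF assms(1-5)] low_deg_prob_bounds[of p N] assms(1,2)
    by (intro mult_left_mono) (auto simp: I_def)
  also have "\<dots> = bprob p ?M ?L * ?m"
    using low_deg_prob_eq_bprob[of ?M p] by simp
  also have "\<dots> \<le> bprob p I (?E \<inter> ?L)"
  proof (rule bprob_Int_ge_section)
    fix G H :: "nat \<times> nat \<Rightarrow> bool"
    assume "\<And>e. e \<in> ?M \<Longrightarrow> G e = H e"
    then have "{e \<in> ?M. G e} = {e \<in> ?M. H e}"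
      by auto
    then show "G \<in> ?L \<longleftrightarrow> H \<in> ?L"
      by simp
  qed (simp_all add: I_def col_edges_subset[OF assms(3)] up_closed_deg2_event assms(2)
      less_imp_le[OF assms(1)])
  finally show ?thesis
    by (simp add: mult.assoc)
qed

lemma bprob_deg2_event_le_product:
  assumes "0 < p" "p \<le> 1" "K \<subseteq> {..<N}" "finite C" "C \<subseteq> {..<N}"
  shows "bprob p ({..<N} \<times> {..<N}) (deg2_event N K C)
    \<le> (1 - low_deg_prob N p) ^ card K * (1 - low_deg_prob N p * rho_factor N p ^ card K) ^ card C"
  using assms(4,5)
proof (induction C rule: finite_induct)
  case empty
  then show ?case
    using bprob_deg2_event_rows[of p K N] finite_subset[OF assms(3)] assms by simp
next
  case (insert j C)
  let ?I = "{..<N} \<times> {..<N}" and ?q = "low_deg_prob N p * rho_factor N p ^ card K"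
  have "?q \<le> 1 * 1"
    using low_deg_prob_bounds[of p N] rho_factor_bounds[OF assms(1,2), of N] assms(1,2)
    by (intro mult_mono power_le_one) auto
  then have "0 \<le> 1 - ?q"
    by simp
  have "bprob p ?I (deg2_event N K (insert j C))
      = bprob p ?I (deg2_event N K C)
        - bprob p ?I (deg2_event N K C \<inter> {G. card {e \<in> col_edges N j. G e} \<le> 1})"
    unfolding deg2_event_insert_col by (rule bprob_Int_Compl) simp
  also have "\<dots> \<le> (1 - ?q) * bprob p ?I (deg2_event N K C)"
  proof -
    have "?q * bprob p ?I (deg2_event N K C)
        \<le> bprob p ?I (deg2_event N K C \<inter> {G. card {e \<in> col_edges N j. G e} \<le> 1})"
      using insert by (intro bprob_deg2_event_low_col assms) auto
    then show ?thesis
      by (simp add: left_diff_distrib)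
  qed
  also have "\<dots> \<le> (1 - ?q) * ((1 - low_deg_prob N p) ^ card K * (1 - ?q) ^ card C)"
    using insert \<open>0 \<le> 1 - ?q\<close> by (intro mult_left_mono) auto
  finally show ?case
    using insert.hyps by (simp add: mult.left_commute)
qed

section \<open>Estimates for the logarithm\<close>

lemma ln_one_plus_ge:
  fixes t :: real
  assumes "0 \<le> t"
  shows "2 * t / (2 + t) \<le> ln (1 + t)"
proof (cases "t = 0")
  case False
  then show ?thesis
    using ln_inverse_approx_ge[of 1 "1 + t"] assms by (simp add: add.commute)
qed simp

lemma minus_ln_one_minus_ge:
  fixes q :: real
  assumes "0 \<le> q" "q < 1"
  shows "2 * q / (2 - q) \<le> - ln (1 - q)"
proof -
  have "2 + q / (1 - q) = (2 - q) / (1 - q)"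
    using assms by (simp add: field_simps)
  then have "2 * q / (2 - q) = 2 * (q / (1 - q)) / (2 + q / (1 - q))"
    using assms by simp
  also have "\<dots> \<le> ln (1 + q / (1 - q))"
    using assms by (intro ln_one_plus_ge) simp
  also have "ln (1 + q / (1 - q)) = - ln (1 - q)"
    using assms by (simp add: field_simps ln_div)
  finally show ?thesis .
qed

lemma xlog_one_plus_inverse_ge:
  fixes s :: real
  assumes "0 < s"
  shows "2 * s / (2 * s + 1) \<le> s * ln (1 + 1 / s)"
proof -
  have "2 * (1 / s) / (2 + 1 / s) \<le> ln (1 + 1 / s)"
    using assms by (intro ln_one_plus_ge) simp
  then have "s * (2 * (1 / s) / (2 + 1 / s)) \<le> s * ln (1 + 1 / s)"
    using assms by (intro mult_left_mono) auto
  moreover have "s * (2 * (1 / s) / (2 + 1 / s)) = 2 * s / (2 * s + 1)"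
    using assms by (simp add: field_simps)
  ultimately show ?thesis
    by simp
qed

lemma minus_ln_one_minus_lower_bounds:
  fixes q :: real
  assumes "0 \<le> q" "q < 1"
  shows "q \<le> - ln (1 - q)" "2 * q\<^sup>2 \<le> - ln (1 - q)"
proof -
  have "0 \<le> 2 * q * (1 - q)\<^sup>2"
    using assms by simp
  then have "2 * q\<^sup>2 * (2 - q) \<le> 2 * q" "q * (2 - q) \<le> 2 * q"
    using assms by (simp_all add: algebra_simps power2_eq_square)
  then have "q \<le> 2 * q / (2 - q)" "2 * q\<^sup>2 \<le> 2 * q / (2 - q)"
    using assms by (simp_all add: pos_le_divide_eq)
  then show "q \<le> - ln (1 - q)" "2 * q\<^sup>2 \<le> - ln (1 - q)"
    using minus_ln_one_minus_ge[OF assms] by linarith+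
qed

lemma double_le_log_terms:
  fixes q \<sigma> R :: real
  assumes q: "0 < q" "q < 1" and "0 < \<sigma>" and R: "0 \<le> R" "1 - \<sigma> / (1 - q) \<le> R"
  shows "2 * q \<le> - ln (1 - q) + q * R + 2 * q * (\<sigma> * ln (1 + 1 / \<sigma>))"
proof -
  define L where "L = - ln (1 - q)"
  define f where "f = \<sigma> * ln (1 + 1 / \<sigma>)"
  have L: "q \<le> L" "2 * q\<^sup>2 \<le> L"
    using minus_ln_one_minus_lower_bounds q by (simp_all add: L_def)
  have f: "2 * \<sigma> / (2 * \<sigma> + 1) \<le> f"
    unfolding f_def using xlog_one_plus_inverse_ge[OF \<open>0 < \<sigma>\<close>] .
  have qR: "0 \<le> q * R"
    using q R by simp
  have "2 * q \<le> L + q * R + 2 * q * f"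
  proof (cases "1 / 2 \<le> \<sigma>")
    case True
    then have "1 / 2 \<le> 2 * \<sigma> / (2 * \<sigma> + 1)"
      by (simp add: field_simps)
    then have "q * 1 \<le> q * (2 * f)"
      using f q by (intro mult_left_mono) auto
    then have "q \<le> 2 * q * f"
      by simp
    then show ?thesis
      using L qR by linarith
  next
    case False
    then have "\<sigma> \<le> 2 * \<sigma> / (2 * \<sigma> + 1)"
      using \<open>0 < \<sigma>\<close> by (simp add: field_simps)
    then have f\<sigma>: "2 * q * \<sigma> \<le> 2 * q * f"
      using f q by (intro mult_left_mono) auto
    show ?thesis
    proof (cases "1 - q \<le> \<sigma>")
      case True
      then have "2 * q * (1 - q) \<le> 2 * q * \<sigma>"
        using q by (intro mult_left_mono) auto
      then show ?thesis
        using f\<sigma> L qR by (simp add: algebra_simps power2_eq_square)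
    next
      case False
      define s where "s = \<sigma> / (1 - q)"
      have s: "0 < s" "s < 1" "\<sigma> = s * (1 - q)"
        using False q \<open>0 < \<sigma>\<close> by (simp_all add: s_def field_simps)
      have "q * (1 - s) \<le> q * R"
        using R q by (intro mult_left_mono) (auto simp: s_def)
      moreover have "q * s * (1 - 2 * q) \<ge> min 0 (q * (1 - 2 * q))"
      proof (cases "q \<le> 1 / 2")
        case True
        then show ?thesis
          using q s by simp
      next
        case False
        then have "q * (1 - 2 * q) \<le> 0"
          using q by (intro mult_nonneg_nonpos) auto
        then have "q * (1 - 2 * q) * 1 \<le> q * (1 - 2 * q) * s"
          using s by (intro mult_left_mono_neg) auto
        then show ?thesis
          by (simp add: algebra_simps)
      qed
      moreover have "min 0 (q * (1 - 2 * q)) + L \<ge> q"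
        using L by (simp add: algebra_simps power2_eq_square)
      ultimately show ?thesis
        using f\<sigma> s(3) by (simp add: algebra_simps)
    qed
  qed
  then show ?thesis
    by (simp add: L_def f_def)
qed

lemma combined_exponent_bound:
  fixes L q \<rho> f :: real and a b n :: nat
  assumes "q \<le> L" "0 \<le> q" "0 \<le> \<rho>" "\<rho> \<le> 1" "0 \<le> f" "b \<le> a" "a \<le> n"
    and key: "2 * q \<le> L + q * \<rho> ^ n + 2 * q * f"
  shows "(real a + real b) * q * (1 - f) \<le> real a * L + real b * q * \<rho> ^ a"
proof (cases "0 \<le> \<rho> ^ a - 1 + f")
  case True
  have "0 \<le> real a * (L - q + q * f)"
    using assms by simp
  moreover have "0 \<le> real b * q * (\<rho> ^ a - 1 + f)"
    using True assms by simp
  ultimately show ?thesis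
    by (simp add: algebra_simps)
next
  case False
  then have "q * (\<rho> ^ a - 1 + f) \<le> 0"
    using assms by (simp add: mult_nonneg_nonpos)
  then have "real a * (q * (\<rho> ^ a - 1 + f)) \<le> real b * (q * (\<rho> ^ a - 1 + f))"
    using assms by (intro mult_right_mono_neg) auto
  moreover have "q * \<rho> ^ n \<le> q * \<rho> ^ a"
    using assms by (intro mult_left_mono power_decreasing) auto
  then have "0 \<le> real a * (L + q * \<rho> ^ a + 2 * q * f - 2 * q)"
    using key by simp
  ultimately show ?thesis
    by (simp add: algebra_simps)
qed

lemma product_le_exp:
  fixes q \<rho> \<sigma> :: real and a b n :: nat
  assumes q: "0 < q" "q < 1" and \<rho>: "0 \<le> \<rho>" "\<rho> \<le> 1" and "0 < \<sigma>"
    and "1 - \<sigma> / (1 - q) \<le> \<rho> ^ n" "b \<le> a" "a \<le> n"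
  shows "(1 - q) ^ a * (1 - q * \<rho> ^ a) ^ b
    \<le> exp (- ((real a + real b) * q) + (real a + real b) * q * \<sigma> * ln (1 + 1 / \<sigma>))"
proof -
  define L where "L = - ln (1 - q)"
  define f where "f = \<sigma> * ln (1 + 1 / \<sigma>)"
  have "2 * q \<le> L + q * \<rho> ^ n + 2 * q * f"
    unfolding L_def f_def using assms by (intro double_le_log_terms) auto
  then have comb: "(real a + real b) * q * (1 - f) \<le> real a * L + real b * q * \<rho> ^ a"
    using assms minus_ln_one_minus_lower_bounds(1)[of q] \<open>0 < \<sigma>\<close>
    by (intro combined_exponent_bound) (auto simp: L_def f_def)
  have "exp (- (real a * L)) = exp (ln (1 - q)) ^ a"
    by (simp add: L_def exp_of_nat_mult)
  then have "(1 - q) ^ a = exp (- (real a * L))"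
    using q by simp
  moreover have "(1 - q * \<rho> ^ a) ^ b \<le> exp (- (q * \<rho> ^ a)) ^ b"
  proof (intro power_mono)
    have "q * \<rho> ^ a \<le> 1 * 1"
      using q \<rho> by (intro mult_mono power_le_one) auto
    then show "0 \<le> 1 - q * \<rho> ^ a"
      by simp
  qed (use exp_ge_add_one_self[of "- (q * \<rho> ^ a)"] in simp)
  ultimately have "(1 - q) ^ a * (1 - q * \<rho> ^ a) ^ b
      \<le> exp (- (real a * L)) * exp (- (real b * (q * \<rho> ^ a)))"
    by (simp add: exp_of_nat_mult[symmetric])
  also have "\<dots> = exp (- (real a * L + real b * q * \<rho> ^ a))"
    by (simp add: exp_add[symmetric] algebra_simps)
  also have "\<dots> \<le> exp (- ((real a + real b) * q * (1 - f)))"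
    using comb by simp
  also have "- ((real a + real b) * q * (1 - f))
      = - ((real a + real b) * q) + (real a + real b) * q * \<sigma> * ln (1 + 1 / \<sigma>)"
    by (simp add: f_def algebra_simps)
  finally show ?thesis .
qed

lemma rho_factor_pow_ge:
  assumes "0 < p" "p < 1" "2 \<le> N"
  shows "1 - p * real N * low_deg_prob (N - 1) p / (1 - low_deg_prob N p) \<le> rho_factor N p ^ N"
proof -
  let ?r = "low_deg_prob (N - 1) p" and ?q = "low_deg_prob N p"
  have r: "0 \<le> ?r" "?r \<le> 1"
    using low_deg_prob_bounds[of p "N - 1"] assms by auto
  have "?q < 1"
    using low_deg_prob_less_1 assms by simp
  have "(1 - p) * ?r \<le> ?q"
    using low_deg_prob_Suc[of "N - 1" p] assms by simp
  have den: "0 < 1 - (1 - p) * ?r"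
    using rho_factor_denominator_pos assms by simp
  have rho: "0 \<le> rho_factor N p" "rho_factor N p \<le> 1"
    using rho_factor_bounds assms by auto
  have "1 - real N * (1 - rho_factor N p) \<le> rho_factor N p ^ N"
    using Bernoulli_inequality[of "rho_factor N p - 1" N] rho by (simp add: algebra_simps)
  moreover have "real N * (1 - rho_factor N p) = p * real N * ?r / (1 - (1 - p) * ?r)"
    using den by (simp add: rho_factor_def field_simps)
  moreover have "p * real N * ?r / (1 - (1 - p) * ?r) \<le> p * real N * ?r / (1 - ?q)"
    using r assms \<open>(1 - p) * ?r \<le> ?q\<close> \<open>?q < 1\<close> by (intro divide_left_mono) auto
  ultimately show ?thesis
    by linarith
qed

lemma bprob_deg2_event_exp_bound:
  assumes "0 < p" "p < 1" "2 \<le> N" "K \<subseteq> {..<N}" "C \<subseteq> {..<N}"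
  defines "m \<equiv> (real (card K) + real (card C)) * low_deg_prob N p"
    and "\<sigma> \<equiv> p * real N * low_deg_prob (N - 1) p"
  shows "bprob p ({..<N} \<times> {..<N}) (deg2_event N K C)
    \<le> exp (- m + m * \<sigma> * ln (1 + 1 / \<sigma>))"
proof -
  have bound: "(1 - low_deg_prob N p) ^ a * (1 - low_deg_prob N p * rho_factor N p ^ a) ^ b
      \<le> exp (- m + m * \<sigma> * ln (1 + 1 / \<sigma>))"
    if "b \<le> a" "a \<le> N" "real a + real b = real (card K) + real (card C)" for a b
    unfolding m_def \<sigma>_def \<open>real a + real b = _\<close>[symmetric]
  proof (rule product_le_exp)
    show "1 - p * real N * low_deg_prob (N - 1) p / (1 - low_deg_prob N p) \<le> rho_factor N p ^ N"
      using rho_factor_pow_ge assms(1-3) .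
  qed (use assms that rho_factor_bounds low_deg_prob_less_1 low_deg_prob_pos in auto)
  have KC: "finite K" "finite C" "card K \<le> N" "card C \<le> N"
    using assms(4,5) finite_subset card_mono[of "{..<N}"] by auto
  show ?thesis
  proof (cases "card C \<le> card K")
    case True
    then show ?thesis
      using bprob_deg2_event_le_product[OF assms(1) _ assms(4) KC(2) assms(5)]
        bound[of "card C" "card K"] KC assms
      by force
  next
    case False
    then show ?thesis
      using bprob_deg2_event_le_product[OF assms(1) _ assms(5) KC(1) assms(4)]
        bound[of "card K" "card C"] KC assms
      by (force simp: bprob_deg2_event_commute[of p N K C])
  qed
qed

lemma low_deg_count_zero_subset:
  "{G. low_deg_count N T G = 0} \<subseteq> deg2_event N {i \<in> {..<N}. Inl i \<notin> T} {j \<in> {..<N}. Inr j \<notin> T}"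
proof
  fix G
  assume "G \<in> {G. low_deg_count N T G = 0}"
  then have "{v \<in> bip_vertices N - T. bip_degree N G v \<le> 1} = {}"
    by (simp add: low_deg_count_def bip_vertices_def)
  then show "G \<in> deg2_event N {i \<in> {..<N}. Inl i \<notin> T} {j \<in> {..<N}. Inr j \<notin> T}"
    unfolding deg2_event_def bip_vertices_def
    by (force simp: bip_degree_Inl[symmetric] bip_degree_Inr[symmetric])
qed

lemma card_parts_outside:
  assumes "T \<subseteq> bip_vertices N"
  shows "card {i \<in> {..<N}. Inl i \<notin> T} + card {j \<in> {..<N}. Inr j \<notin> T} + card T = 2 * N"
proof -
  let ?K = "{i \<in> {..<N}. Inl i \<notin> T}" and ?C = "{j \<in> {..<N}. Inr j \<notin> T}"
  have fin: "finite (bip_vertices N)"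
    by (simp add: bip_vertices_def)
  have "card (bip_vertices N) = 2 * N"
    unfolding bip_vertices_def by (subst card_Un_disjoint) (auto simp: card_image)
  moreover have "bip_vertices N - T = Inl ` ?K \<union> Inr ` ?C"
    by (auto simp: bip_vertices_def)
  then have "card (bip_vertices N - T) = card ?K + card ?C"
    by (simp only:) (subst card_Un_disjoint, auto simp: card_image)
  moreover have "card (bip_vertices N - T) + card T = card (bip_vertices N)"
    using fin assms by (metis card_Diff_subset card_mono finite_subset le_add_diff_inverse2)
  ultimately show ?thesis
    by simp
qed

theorem lemma5p6:
  fixes N t :: nat and p :: real and T :: "(nat + nat) set"
  assumes "N \<ge> 2" and "0 < p" and "p < 1"
    and "T \<subseteq> bip_vertices N" and "card T = t"
  defines "\<mu> \<equiv> (2 * real N - real t) * ((1 - p) ^ N + real N * p * (1 - p) ^ (N - 1))"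
    and "\<sigma> \<equiv> p * real N * ((1 - p) ^ (N - 1) + (real N - 1) * p * (1 - p) ^ (N - 2))"
  shows "measure_pmf.prob (G_NNp N p) {G. low_deg_count N T G = 0}
           \<le> exp (- \<mu> + \<mu> * \<sigma> * ln (1 + 1 / \<sigma>))"
proof -
  let ?K = "{i \<in> {..<N}. Inl i \<notin> T}" and ?C = "{j \<in> {..<N}. Inr j \<notin> T}"
  have "real (card ?K) + real (card ?C) = 2 * real N - real t"
    using card_parts_outside[OF assms(4)] assms(5) by linarith
  then have \<mu>: "\<mu> = (real (card ?K) + real (card ?C)) * low_deg_prob N p"
    by (simp add: \<mu>_def low_deg_prob_def)
  have "N - 1 - 1 = N - 2" "real (N - 1) = real N - 1"
    using assms(1) by simp_all
  then have \<sigma>: "\<sigma> = p * real N * low_deg_prob (N - 1) p"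
    by (simp add: \<sigma>_def low_deg_prob_def)
  have "measure_pmf.prob (G_NNp N p) {G. low_deg_count N T G = 0}
      = bprob p ({..<N} \<times> {..<N}) {G. low_deg_count N T G = 0}"
    using assms(2,3) by (intro prob_G_NNp_eq_bprob) auto
  also have "\<dots> \<le> bprob p ({..<N} \<times> {..<N}) (deg2_event N ?K ?C)"
    using assms(2,3) by (intro bprob_mono low_deg_count_zero_subset) auto
  also have "\<dots> \<le> exp (- \<mu> + \<mu> * \<sigma> * ln (1 + 1 / \<sigma>))"
    unfolding \<mu> \<sigma> by (rule bprob_deg2_event_exp_bound) (use assms(1-3) in auto)
  finally show ?thesis .
qed

end
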